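(* There exists a set of $1932$ unit vectors in $\mathbb{R}^{14}$ such that the inner product of any two distinct vectors lies in $\{0,\pm\tfrac14,\pm\tfrac12,-1\}$. In particular the kissing number in dimension $14$ is at least $1932$.
   Context: The kissing number in dimension $d$ is the maximal number of unit vectors in $\mathbb{R}^d$ with pairwise inner products at most $1/2$. *)

theory Defs
  imports "HOL-Analysis.Analysis" "HOL-Library.Numeral_Type"
begin

definition kissing_config :: "'a::real_inner set \<Rightarrow> bool" where
  "kissing_config S \<longleftrightarrow> (\<forall>x\<in>S. norm x = 1) \<and>
     (\<forall>x\<in>S. \<forall>y\<in>S. x \<noteq> y \<longrightarrow> inner x y \<le> 1/2)"

definition kissing_number :: "'a::euclidean_space itself \<Rightarrow> nat" where
  "kissing_number _ = Sup {card S | S :: 'a set. finite S \<and> kissing_config S}"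

end

theory Submission
  imports Defs
begin

(*
  The 63 roots of E7 modulo sign, scaled to squared length 4, form a set R in Z^7 with inner
  products in {-2, 0, 2}. Assign to each root x a frame F(x) of seven mutually orthogonal roots
  such that non-orthogonal roots receive disjoint frames. Then the 4 * 63 * 7 = 1764 vectors
  (s x, t y) with y in F(x) and signs s, t, together with the 2 * 84 vectors (u, 0) and (0, u)
  for u = +-2e_i +-2e_j in Z^7, all have squared length 8 and pairwise inner products in
  {0, +-2, +-4, -8}; scaled by 1/(2 sqrt 2) they are the required 1932 unit vectors in R^14.
  The bound on the kissing number then only needs the sizes of kissing configurations to be
  bounded, which follows because rounding coordinates to a grid of mesh 1/n separates points at
  distance at least 1.
*)

definition dot :: "int list \<Rightarrow> int list \<Rightarrow> int" where
  "dot x y = sum_list (map2 (*) x y)"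

lemma dot_commute: "dot x y = dot y x"
  unfolding dot_def by (subst zip_commute) (simp add: case_prod_unfold comp_def mult.commute)

lemma dot_append: "length a = length c \<Longrightarrow> dot (a @ b) (c @ d) = dot a c + dot b d"
  by (simp add: dot_def)

lemma dot_scale: "dot (map ((*) s) x) (map ((*) t) y) = s * t * dot x y"
  unfolding dot_def
proof (induction x arbitrary: y)
  case (Cons a x)
  then show ?case by (cases y) (simp_all add: algebra_simps)
qed simp

lemma dot_scale_left: "dot (map ((*) s) x) y = s * dot x y"
  using dot_scale[of s x 1 y] by (simp add: map_idI)

lemma dot_zeros_left [simp]: "dot (replicate n 0) u = 0"
  unfolding dot_def by (simp add: zip_replicate1 comp_def)

lemma dot_zeros_right [simp]: "dot u (replicate n 0) = 0"
  using dot_zeros_left dot_commute by metis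

lemma dot_eq_sum_nth: "length x = length y \<Longrightarrow> dot x y = (\<Sum>k<length x. x ! k * y ! k)"
  unfolding dot_def
proof (induction x arbitrary: y)
  case (Cons a x)
  then obtain b y' where "y = b # y'" "length x = length y'" by (cases y) auto
  then show ?case using Cons.IH by (simp del: sum.lessThan_Suc add: sum.lessThan_Suc_shift)
qed simp

locale frame_doubling =
  fixes m :: nat and R :: "int list set" and F :: "int list \<Rightarrow> int list set" and D :: "int list set"
  assumes finite_R: "finite R" and finite_D: "finite D"
    and length_R: "x \<in> R \<Longrightarrow> length x = m"
    and length_D: "u \<in> D \<Longrightarrow> length u = m"
    and dot_R_self: "x \<in> R \<Longrightarrow> dot x x = 4"
    and dot_R: "x \<in> R \<Longrightarrow> x' \<in> R \<Longrightarrow> x \<noteq> x' \<Longrightarrow> dot x x' \<in> {-2, 0, 2}"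
    and frame_subset: "x \<in> R \<Longrightarrow> F x \<subseteq> R"
    and frame_orthogonal: "x \<in> R \<Longrightarrow> y \<in> F x \<Longrightarrow> y' \<in> F x \<Longrightarrow> y \<noteq> y' \<Longrightarrow> dot y y' = 0"
    \<comment> \<open>otherwise \<open>(x, y)\<close> and \<open>(x', y)\<close> with \<open>dot x x' = 2\<close> would have inner product 6\<close>
    and frames_disjoint:
      "x \<in> R \<Longrightarrow> x' \<in> R \<Longrightarrow> x \<noteq> x' \<Longrightarrow> dot x x' \<noteq> 0 \<Longrightarrow> F x \<inter> F x' = {}"
    and dot_D_self: "u \<in> D \<Longrightarrow> dot u u = 8"
    and dot_D: "u \<in> D \<Longrightarrow> u' \<in> D \<Longrightarrow> u \<noteq> u' \<Longrightarrow> dot u u' \<in> {-8, -4, 0, 4}"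
    and dot_R_D: "x \<in> R \<Longrightarrow> u \<in> D \<Longrightarrow> dot x u \<in> {-4, -2, 0, 2, 4}"
begin

definition frame_index :: "((int list \<times> int list) \<times> int \<times> int) set" where
  "frame_index = Sigma R F \<times> {1, -1} \<times> {1, -1}"

definition code_index :: "(((int list \<times> int list) \<times> int \<times> int) + (int list + int list)) set" where
  "code_index = frame_index <+> (D <+> D)"

fun code_vector :: "((int list \<times> int list) \<times> int \<times> int) + (int list + int list) \<Rightarrow> int list" where
  "code_vector (Inl ((x, y), (s, t))) = map ((*) s) x @ map ((*) t) y"
| "code_vector (Inr (Inl u)) = u @ replicate m 0"
| "code_vector (Inr (Inr u)) = replicate m 0 @ u"

lemma frame_index_memD:
  assumes "((x, y), (s, t)) \<in> frame_index"
  shows "x \<in> R" "y \<in> R" "y \<in> F x" "s \<in> {1, -1}" "t \<in> {1, -1}"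
  using assms frame_subset by (auto simp: frame_index_def)

lemma dot_frame_vectors:
  assumes "a \<in> frame_index" "b \<in> frame_index" "a \<noteq> b"
  shows "dot (code_vector (Inl a)) (code_vector (Inl b)) \<in> {0, 2, -2, 4, -4, -8}"
proof -
  obtain x y s t where a: "a = ((x, y), (s, t))" by (metis prod.collapse)
  obtain x' y' s' t' where b: "b = ((x', y'), (s', t'))" by (metis prod.collapse)
  note p = frame_index_memD[OF assms(1)[unfolded a]]
    and q = frame_index_memD[OF assms(2)[unfolded b]]
  have dot_eq: "dot (code_vector (Inl a)) (code_vector (Inl b)) = s * s' * dot x x' + t * t' * dot y y'"
    using length_R[OF p(1)] length_R[OF q(1)] by (simp add: a b dot_append dot_scale)
  have signs: "s * s' \<in> {1, -1}" "t * t' \<in> {1, -1}"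
    using p q by auto
  show ?thesis
  proof (cases "x = x'")
    case True
    show ?thesis
    proof (cases "y = y'")
      case True
      then have "s \<noteq> s' \<or> t \<noteq> t'" using \<open>x = x'\<close> assms(3) by (auto simp: a b)
      then show ?thesis
        using dot_eq \<open>x = x'\<close> True dot_R_self[OF p(1)] dot_R_self[OF p(2)] p q by auto
    next
      case False
      then have "dot y y' = 0" using frame_orthogonal p q \<open>x = x'\<close> by auto
      then have "dot (code_vector (Inl a)) (code_vector (Inl b)) = s * s' * 4"
        using dot_eq \<open>x = x'\<close> dot_R_self[OF p(1)] by simp
      then show ?thesis using signs(1) by (auto simp: mult.commute)
    qed
  next
    case False
    show ?thesis
    proof (cases "dot x x' = 0")
      case True
      have "dot y y' \<in> {4, -2, 0, 2}"
        using dot_R[OF p(2) q(2)] dot_R_self[OF p(2)] by (cases "y = y'") auto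
      then show ?thesis using True dot_eq signs by auto
    next
      case False
      then have "y \<noteq> y'" using frames_disjoint p q \<open>x \<noteq> x'\<close> by blast
      then have "dot y y' \<in> {-2, 0, 2}" using dot_R p q by blast
      moreover have "dot x x' \<in> {-2, 2}" using dot_R[OF p(1) q(1) \<open>x \<noteq> x'\<close>] False by auto
      ultimately show ?thesis using dot_eq signs by auto
    qed
  qed
qed

lemma dot_frame_vector_D_vector:
  assumes "p \<in> frame_index" "b \<in> D <+> D"
  shows "dot (code_vector (Inl p)) (code_vector (Inr b)) \<in> {-4, -2, 0, 2, 4}"
proof -
  obtain x y s t where p: "p = ((x, y), (s, t))" by (metis prod.collapse)
  note mem = frame_index_memD[OF assms(1)[unfolded p]]
  from assms(2) consider u where "u \<in> D" "b = Inl u" | u where "u \<in> D" "b = Inr u"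
    by blast
  then show ?thesis
  proof cases
    case 1
    then have "dot (code_vector (Inl p)) (code_vector (Inr b)) = s * dot x u"
      using length_R[OF mem(1)] length_D by (simp add: p dot_append dot_scale_left)
    then show ?thesis using dot_R_D[OF mem(1) 1(1)] mem(4) by auto
  next
    case 2
    then have "dot (code_vector (Inl p)) (code_vector (Inr b)) = t * dot y u"
      using length_R[OF mem(1)] by (simp add: p dot_append dot_scale_left)
    then show ?thesis using dot_R_D[OF mem(2) 2(1)] mem(5) by auto
  qed
qed

lemma dot_code_vectors:
  assumes "i \<in> code_index" "j \<in> code_index" "i \<noteq> j"
  shows "dot (code_vector i) (code_vector j) \<in> {0, 2, -2, 4, -4, -8}"
proof -
  have D_pair: "dot u u' \<in> {0, 2, -2, 4, -4, -8}" if "u \<in> D" "u' \<in> D" "u \<noteq> u'" for u u'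
    using dot_D[OF that] by auto
  have D_vectors: "dot (code_vector (Inr a)) (code_vector (Inr b)) \<in> {0, 2, -2, 4, -4, -8}"
    if "a \<in> D <+> D" "b \<in> D <+> D" "a \<noteq> b" for a b
    using that by (elim PlusE) (auto simp: dot_append length_D dest: D_pair)
  from assms(1,2) consider
      (frame_frame) a b where "i = Inl a" "j = Inl b" "a \<in> frame_index" "b \<in> frame_index"
    | (frame_D) a b where "i = Inl a" "j = Inr b" "a \<in> frame_index" "b \<in> D <+> D"
    | (D_frame) a b where "i = Inr a" "j = Inl b" "a \<in> D <+> D" "b \<in> frame_index"
    | (D_D) a b where "i = Inr a" "j = Inr b" "a \<in> D <+> D" "b \<in> D <+> D"
    unfolding code_index_def by blast
  then show ?thesis
  proof cases
    case frame_frame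
    then show ?thesis using dot_frame_vectors assms(3) by blast
  next
    case frame_D
    then show ?thesis using dot_frame_vector_D_vector[of a b] by auto
  next
    case D_frame
    then show ?thesis using dot_frame_vector_D_vector[of b a] by (auto simp: dot_commute)
  next
    case D_D
    then show ?thesis using D_vectors assms(3) by blast
  qed
qed

lemma length_code_vector: "i \<in> code_index \<Longrightarrow> length (code_vector i) = 2 * m"
  using length_R length_D frame_index_memD by (auto simp: code_index_def)

lemma dot_code_vector_self:
  assumes "i \<in> code_index"
  shows "dot (code_vector i) (code_vector i) = 8"
proof (cases i rule: code_vector.cases)
  case (1 x y s t)
  then have "((x, y), (s, t)) \<in> frame_index" using assms by (auto simp: code_index_def)
  from frame_index_memD[OF this] show ?thesis
    using 1 dot_R_self length_R by (auto simp: dot_append dot_scale)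
qed (use assms dot_D_self length_D in \<open>auto simp: code_index_def dot_append\<close>)

lemma inj_on_code_vector: "inj_on code_vector code_index"
proof (rule inj_onI, rule ccontr)
  fix i j assume "i \<in> code_index" "j \<in> code_index" "code_vector i = code_vector j" "i \<noteq> j"
  then show False using dot_code_vectors[of i j] dot_code_vector_self[of i] by auto
qed

lemma finite_frame_index: "finite frame_index"
  unfolding frame_index_def
  using finite_R frame_subset by (intro finite_cartesian_product finite_SigmaI) (auto intro: finite_subset)

lemma finite_code_index: "finite code_index"
  using finite_frame_index finite_D by (simp add: code_index_def)

lemma card_code_index: "card code_index = 4 * (\<Sum>x\<in>R. card (F x)) + 2 * card D"
proof -
  have "card (Sigma R F) = (\<Sum>x\<in>R. card (F x))"
    using finite_R frame_subset by (intro card_SigmaI) (auto intro: finite_subset)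
  moreover have "card {1, -1 :: int} = 2" by simp
  ultimately have "card frame_index = 4 * (\<Sum>x\<in>R. card (F x))"
    by (simp add: frame_index_def card_cartesian_product)
  then show ?thesis
    using finite_frame_index finite_D by (simp add: code_index_def card_Plus)
qed

end

lemma unit_vectors_of_int_lists:
  fixes W :: "int list set" and r :: int
  assumes "finite W" "r > 0"
    and length_W: "\<And>v. v \<in> W \<Longrightarrow> length v = CARD('n::finite)"
    and dot_W_self: "\<And>v. v \<in> W \<Longrightarrow> dot v v = r"
  obtains S :: "(real ^ 'n) set"
  where "finite S" "card S = card W" "\<And>x. x \<in> S \<Longrightarrow> norm x = 1"
    "\<And>x y. x \<in> S \<Longrightarrow> y \<in> S \<Longrightarrow> x \<noteq> y \<Longrightarrow> \<exists>v\<in>W. \<exists>w\<in>W. v \<noteq> w \<and> inner x y = dot v w / r"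
proof -
  obtain h :: "'n \<Rightarrow> nat" where h: "bij_betw h UNIV {..<CARD('n)}"
    using ex_bij_betw_finite_nat[of "UNIV :: 'n set"] by (auto simp: atLeast0LessThan)
  define E :: "int list \<Rightarrow> real ^ 'n" where "E l = (\<chi> i. of_int (l ! h i) / sqrt r)" for l
  have inner_E: "inner (E v) (E w) = dot v w / r" if "v \<in> W" "w \<in> W" for v w
  proof -
    have "inner (E v) (E w) = (\<Sum>i\<in>UNIV. of_int (v ! h i * w ! h i) / r)"
      unfolding inner_vec_def E_def using \<open>r > 0\<close> by simp
    also have "\<dots> = (\<Sum>k<CARD('n). of_int (v ! k * w ! k) / r)"
      using sum.reindex_bij_betw[OF h] by simp
    also have "\<dots> = dot v w / r"
      using dot_eq_sum_nth[of v w] length_W that by (simp add: sum_divide_distrib)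
    finally show ?thesis .
  qed
  have "inj_on E W"
  proof (rule inj_onI)
    fix v w assume "v \<in> W" "w \<in> W" "E v = E w"
    then have "v ! h i = w ! h i" for i
      using \<open>r > 0\<close> by (auto simp: E_def vec_eq_iff)
    then have "v ! k = w ! k" if "k < CARD('n)" for k
      using that h by (metis bij_betw_iff_bijections lessThan_iff)
    then show "v = w" using length_W \<open>v \<in> W\<close> \<open>w \<in> W\<close> by (auto intro: nth_equalityI)
  qed
  show thesis
  proof (rule that[of "E ` W"])
    show "finite (E ` W)" using \<open>finite W\<close> by simp
    show "card (E ` W) = card W" using \<open>inj_on E W\<close> by (rule card_image)
    show "norm x = 1" if "x \<in> E ` W" for x
      using \<open>x \<in> E ` W\<close> inner_E dot_W_self \<open>r > 0\<close> by (auto simp: norm_eq_sqrt_inner)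
    fix x y assume "x \<in> E ` W" "y \<in> E ` W" "x \<noteq> y"
    then obtain v w where "v \<in> W" "w \<in> W" "x = E v" "y = E w" "v \<noteq> w" by blast
    then show "\<exists>v\<in>W. \<exists>w\<in>W. v \<noteq> w \<and> inner x y = dot v w / r"
      using inner_E by blast
  qed
qed

lemma kissing_config_card_le:
  fixes T :: "(real ^ 'n) set"
  assumes "finite T" "kissing_config T"
  shows "card T \<le> (2 * CARD('n) + 1) ^ CARD('n)"
proof -
  define n where "n = CARD('n)"
  define g where "g x = (\<lambda>i. \<lfloor>n * x $ i\<rfloor>)" for x :: "real ^ 'n"
  have unit: "norm x = 1" if "x \<in> T" for x using assms(2) that by (auto simp: kissing_config_def)
  have maps_to: "g ` T \<subseteq> Pi\<^sub>E UNIV (\<lambda>_. {-int n..int n})"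
    unfolding PiE_UNIV_domain
  proof clarify
    fix x i assume "x \<in> T"
    then have "\<bar>x $ i\<bar> \<le> 1" using component_le_norm_cart[of x i] unit by simp
    then have "\<bar>n * x $ i\<bar> \<le> n" by (simp add: abs_mult mult_left_le)
    then show "g x i \<in> {-int n..int n}"
      unfolding g_def by (simp add: abs_le_iff le_floor_iff floor_le_iff)
  qed
  have inj: "inj_on g T"
  proof (rule inj_onI, rule ccontr)
    fix x y assume xy: "x \<in> T" "y \<in> T" "g x = g y" "x \<noteq> y"
    have "n > 0" by (simp add: n_def)
    have close: "(x $ i - y $ i)\<^sup>2 < 1 / n\<^sup>2" for i
    proof -
      have "\<bar>n * x $ i - n * y $ i\<bar> < 1"
        using fun_cong[OF xy(3), of i] floor_correct[of "n * x $ i"] floor_correct[of "n * y $ i"]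
        unfolding g_def by linarith
      then have "n * \<bar>x $ i - y $ i\<bar> < 1"
        by (simp add: abs_mult flip: right_diff_distrib)
      then have "\<bar>x $ i - y $ i\<bar> < 1 / n"
        using \<open>n > 0\<close> by (simp add: less_divide_eq mult.commute)
      then have "\<bar>x $ i - y $ i\<bar>\<^sup>2 < (1 / n)\<^sup>2"
        by (rule power_strict_mono) auto
      then show ?thesis by (simp add: power_divide)
    qed
    have "(norm (x - y))\<^sup>2 = (\<Sum>i\<in>UNIV. (x $ i - y $ i)\<^sup>2)"
      unfolding power2_norm_eq_inner inner_vec_def by (simp add: power2_eq_square)
    also have "\<dots> < (\<Sum>i\<in>(UNIV :: 'n set). 1 / n\<^sup>2)"
      by (rule sum_strict_mono) (use close in auto)
    also have "\<dots> \<le> 1"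
      using \<open>n > 0\<close> by (simp add: n_def[symmetric] power2_eq_square field_simps)
    finally have "(norm (x - y))\<^sup>2 < 1" .
    moreover have "(norm (x - y))\<^sup>2 = 2 - 2 * inner x y"
      using dot_norm_neg[of x y] unit[OF xy(1)] unit[OF xy(2)] by simp
    moreover have "inner x y \<le> 1 / 2"
      using assms(2) xy by (auto simp: kissing_config_def)
    ultimately show False by linarith
  qed
  have "card T \<le> card (Pi\<^sub>E (UNIV :: 'n set) (\<lambda>_. {-int n..int n}))"
    using card_inj_on_le[OF inj maps_to] by (simp add: finite_PiE)
  also have "\<dots> = (2 * n + 1) ^ n"
    by (simp add: card_PiE nat_add_distrib nat_mult_distrib n_def)
  finally show ?thesis by (simp add: n_def)
qed

lemma card_le_kissing_number:
  fixes S :: "(real ^ 'n) set"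
  assumes "finite S" "kissing_config S"
  shows "card S \<le> kissing_number TYPE(real ^ 'n)"
  unfolding kissing_number_def
proof (rule cSup_upper)
  show "card S \<in> {card S | S :: (real ^ 'n) set. finite S \<and> kissing_config S}"
    using assms by blast
  show "bdd_above {card S | S :: (real ^ 'n) set. finite S \<and> kissing_config S}"
    by (rule bdd_aboveI[of _ "(2 * CARD('n) + 1) ^ CARD('n)"]) (use kissing_config_card_le in fastforce)
qed

(* Keys: the roots of E7 modulo sign, scaled to squared length 4, i.e. the vectors 2 e_i and the
   (+-1)-vectors supported on the complements of the lines of a Fano plane on {1..7}. *)
definition e7_frame_table :: "(int list \<times> int list list) list" where
  "e7_frame_table = [([2,0,0,0,0,0,0], [[2,0,0,0,0,0,0],[0,0,1,0,1,1,1],[0,0,1,0,-1,-1,1],[0,1,1,-1,0,0,-1],[0,1,-1,-1,0,0,1],[0,1,0,1,1,-1,0],[0,1,0,1,-1,1,0]]),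
    ([0,2,0,0,0,0,0], [[0,2,0,0,0,0,0],[0,0,1,0,-1,1,-1],[0,0,1,0,-1,-1,1],[1,0,0,-1,0,1,1],[1,0,0,-1,0,-1,-1],[1,0,1,1,1,0,0],[1,0,-1,1,-1,0,0]]),
    ([0,0,2,0,0,0,0], [[0,0,2,0,0,0,0],[1,0,0,1,0,-1,1],[1,0,0,-1,0,1,1],[1,1,0,0,1,0,-1],[1,-1,0,0,-1,0,-1],[0,1,0,1,-1,1,0],[0,1,0,-1,-1,-1,0]]),
    ([0,0,0,2,0,0,0], [[0,0,0,2,0,0,0],[0,0,1,0,1,-1,-1],[0,0,1,0,-1,-1,1],[1,-1,0,0,1,0,1],[1,-1,0,0,-1,0,-1],[1,1,1,0,0,1,0],[1,1,-1,0,0,-1,0]]),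
    ([0,0,0,0,2,0,0], [[0,0,0,0,2,0,0],[1,0,0,1,0,1,-1],[1,0,0,-1,0,1,1],[1,1,-1,0,0,-1,0],[1,-1,1,0,0,-1,0],[0,1,1,1,0,0,1],[0,1,1,-1,0,0,-1]]),
    ([0,0,0,0,0,2,0], [[0,0,0,0,0,2,0],[1,1,0,0,-1,0,1],[1,-1,0,0,-1,0,-1],[0,1,1,-1,0,0,-1],[0,1,-1,1,0,0,-1],[1,0,1,1,1,0,0],[1,0,-1,-1,1,0,0]]),
    ([0,0,0,0,0,0,2], [[0,0,0,0,0,0,2],[1,1,-1,0,0,-1,0],[1,-1,-1,0,0,1,0],[1,0,1,1,1,0,0],[1,0,1,-1,-1,0,0],[0,1,0,1,-1,1,0],[0,1,0,-1,1,1,0]]),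
    ([0,0,1,0,1,1,1], [[2,0,0,0,0,0,0],[0,0,1,0,1,1,1],[0,0,1,0,-1,-1,1],[0,1,1,1,0,0,-1],[0,1,-1,1,0,0,1],[0,1,0,-1,1,-1,0],[0,1,0,-1,-1,1,0]]),
    ([0,0,1,0,1,1,-1], [[0,0,1,0,1,1,-1],[1,0,0,-1,0,-1,-1],[1,-1,0,0,1,0,1],[1,1,-1,0,0,1,0],[0,1,1,-1,0,0,1],[1,0,1,1,-1,0,0],[0,1,0,1,1,-1,0]]),
    ([0,0,1,0,1,-1,1], [[0,0,1,0,1,-1,1],[1,0,0,-1,0,-1,-1],[1,-1,0,0,-1,0,1],[1,1,1,0,0,1,0],[0,1,-1,-1,0,0,1],[1,0,-1,1,1,0,0],[0,1,0,1,-1,-1,0]]),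
    ([0,0,1,0,1,-1,-1], [[0,0,0,2,0,0,0],[0,0,1,0,1,-1,-1],[0,0,1,0,-1,-1,1],[1,1,0,0,1,0,1],[1,1,0,0,-1,0,-1],[1,-1,1,0,0,1,0],[1,-1,-1,0,0,-1,0]]),
    ([0,0,1,0,-1,1,1], [[0,0,1,0,-1,1,1],[1,0,0,-1,0,1,-1],[1,-1,0,0,1,0,1],[1,1,1,0,0,-1,0],[0,1,-1,-1,0,0,1],[1,0,-1,1,-1,0,0],[0,1,0,1,1,1,0]]),
    ([0,0,1,0,-1,1,-1], [[0,2,0,0,0,0,0],[0,0,1,0,-1,1,-1],[0,0,1,0,-1,-1,1],[1,0,0,1,0,1,1],[1,0,0,1,0,-1,-1],[1,0,1,-1,1,0,0],[1,0,-1,-1,-1,0,0]]),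
    ([0,0,1,0,-1,-1,1], [[2,0,0,0,0,0,0],[0,2,0,0,0,0,0],[0,0,0,2,0,0,0],[0,0,1,0,1,1,1],[0,0,1,0,1,-1,-1],[0,0,1,0,-1,1,-1],[0,0,1,0,-1,-1,1]]),
    ([0,0,1,0,-1,-1,-1], [[0,0,1,0,-1,-1,-1],[1,0,0,-1,0,-1,1],[1,-1,0,0,1,0,-1],[1,1,1,0,0,1,0],[0,1,-1,-1,0,0,-1],[1,0,-1,1,-1,0,0],[0,1,0,1,1,-1,0]]),
    ([1,0,0,1,0,1,1], [[0,0,1,0,-1,1,-1],[1,0,0,1,0,1,1],[1,1,0,0,1,0,-1],[1,-1,1,0,0,-1,0],[0,1,1,-1,0,0,1],[1,0,-1,-1,-1,0,0],[0,1,0,1,-1,-1,0]]),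
    ([1,0,0,1,0,1,-1], [[0,0,0,0,2,0,0],[1,0,0,1,0,1,-1],[1,0,0,-1,0,1,1],[1,1,1,0,0,-1,0],[1,-1,-1,0,0,-1,0],[0,1,-1,1,0,0,1],[0,1,-1,-1,0,0,-1]]),
    ([1,0,0,1,0,-1,1], [[0,0,2,0,0,0,0],[1,0,0,1,0,-1,1],[1,0,0,-1,0,1,1],[1,1,0,0,-1,0,-1],[1,-1,0,0,1,0,-1],[0,1,0,1,1,1,0],[0,1,0,-1,1,-1,0]]),
    ([1,0,0,1,0,-1,-1], [[0,0,1,0,-1,1,-1],[1,0,0,1,0,-1,-1],[1,-1,0,0,-1,0,1],[1,1,-1,0,0,1,0],[0,1,1,1,0,0,1],[1,0,1,-1,1,0,0],[0,1,0,-1,-1,-1,0]]),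
    ([1,0,0,-1,0,1,1], [[0,2,0,0,0,0,0],[0,0,2,0,0,0,0],[0,0,0,0,2,0,0],[1,0,0,1,0,1,-1],[1,0,0,1,0,-1,1],[1,0,0,-1,0,1,1],[1,0,0,-1,0,-1,-1]]),
    ([1,0,0,-1,0,1,-1], [[0,0,1,0,-1,1,1],[1,0,0,-1,0,1,-1],[1,1,0,0,1,0,1],[1,-1,1,0,0,-1,0],[0,1,1,1,0,0,-1],[1,0,-1,1,-1,0,0],[0,1,0,-1,-1,-1,0]]),
    ([1,0,0,-1,0,-1,1], [[0,0,1,0,-1,-1,-1],[1,0,0,-1,0,-1,1],[1,1,0,0,1,0,-1],[1,-1,1,0,0,1,0],[0,1,1,1,0,0,1],[1,0,-1,1,-1,0,0],[0,1,0,-1,-1,1,0]]),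
    ([1,0,0,-1,0,-1,-1], [[0,2,0,0,0,0,0],[0,0,1,0,1,1,-1],[0,0,1,0,1,-1,1],[1,0,0,-1,0,1,1],[1,0,0,-1,0,-1,-1],[1,0,1,1,-1,0,0],[1,0,-1,1,1,0,0]]),
    ([1,1,0,0,1,0,1], [[0,0,1,0,1,-1,-1],[1,0,0,-1,0,1,-1],[1,1,0,0,1,0,1],[1,-1,-1,0,0,-1,0],[0,1,-1,1,0,0,-1],[1,0,1,1,-1,0,0],[0,1,0,-1,-1,-1,0]]),
    ([1,1,0,0,1,0,-1], [[0,0,2,0,0,0,0],[1,0,0,1,0,1,1],[1,0,0,-1,0,-1,1],[1,1,0,0,1,0,-1],[1,-1,0,0,-1,0,-1],[0,1,0,1,-1,-1,0],[0,1,0,-1,-1,1,0]]),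
    ([1,1,0,0,-1,0,1], [[0,0,0,0,0,2,0],[1,1,0,0,-1,0,1],[1,-1,0,0,-1,0,-1],[0,1,1,1,0,0,-1],[0,1,-1,-1,0,0,-1],[1,0,1,-1,1,0,0],[1,0,-1,1,1,0,0]]),
    ([1,1,0,0,-1,0,-1], [[0,0,1,0,1,-1,-1],[1,0,0,1,0,-1,1],[1,1,0,0,-1,0,-1],[1,-1,1,0,0,1,0],[0,1,1,-1,0,0,1],[1,0,-1,-1,1,0,0],[0,1,0,1,1,1,0]]),
    ([1,-1,0,0,1,0,1], [[0,0,0,2,0,0,0],[0,0,1,0,1,1,-1],[0,0,1,0,-1,1,1],[1,-1,0,0,1,0,1],[1,-1,0,0,-1,0,-1],[1,1,1,0,0,-1,0],[1,1,-1,0,0,1,0]]),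
    ([1,-1,0,0,1,0,-1], [[0,0,1,0,-1,-1,-1],[1,0,0,1,0,-1,1],[1,-1,0,0,1,0,-1],[1,1,1,0,0,1,0],[0,1,-1,1,0,0,-1],[1,0,-1,-1,-1,0,0],[0,1,0,-1,1,-1,0]]),
    ([1,-1,0,0,-1,0,1], [[0,0,1,0,1,-1,1],[1,0,0,1,0,-1,-1],[1,-1,0,0,-1,0,1],[1,1,1,0,0,1,0],[0,1,-1,1,0,0,1],[1,0,-1,-1,1,0,0],[0,1,0,-1,-1,-1,0]]),
    ([1,-1,0,0,-1,0,-1], [[0,0,2,0,0,0,0],[0,0,0,2,0,0,0],[0,0,0,0,0,2,0],[1,1,0,0,1,0,-1],[1,1,0,0,-1,0,1],[1,-1,0,0,1,0,1],[1,-1,0,0,-1,0,-1]]),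
    ([1,1,1,0,0,1,0], [[0,0,0,2,0,0,0],[0,0,1,0,1,-1,1],[0,0,1,0,-1,-1,-1],[1,-1,0,0,1,0,-1],[1,-1,0,0,-1,0,1],[1,1,1,0,0,1,0],[1,1,-1,0,0,-1,0]]),
    ([1,1,1,0,0,-1,0], [[0,0,1,0,-1,1,1],[1,0,0,1,0,1,-1],[1,-1,0,0,1,0,1],[1,1,1,0,0,-1,0],[0,1,-1,1,0,0,1],[1,0,-1,-1,-1,0,0],[0,1,0,-1,1,1,0]]),
    ([1,1,-1,0,0,1,0], [[0,0,1,0,1,1,-1],[1,0,0,1,0,-1,-1],[1,-1,0,0,1,0,1],[1,1,-1,0,0,1,0],[0,1,1,1,0,0,1],[1,0,1,-1,-1,0,0],[0,1,0,-1,1,-1,0]]),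
    ([1,1,-1,0,0,-1,0], [[0,0,0,2,0,0,0],[0,0,0,0,2,0,0],[0,0,0,0,0,0,2],[1,1,1,0,0,1,0],[1,1,-1,0,0,-1,0],[1,-1,1,0,0,-1,0],[1,-1,-1,0,0,1,0]]),
    ([1,-1,1,0,0,1,0], [[0,0,1,0,1,-1,-1],[1,0,0,-1,0,-1,1],[1,1,0,0,-1,0,-1],[1,-1,1,0,0,1,0],[0,1,1,1,0,0,1],[1,0,-1,1,1,0,0],[0,1,0,-1,1,1,0]]),
    ([1,-1,1,0,0,-1,0], [[0,0,0,0,2,0,0],[1,0,0,1,0,1,1],[1,0,0,-1,0,1,-1],[1,1,-1,0,0,-1,0],[1,-1,1,0,0,-1,0],[0,1,1,1,0,0,-1],[0,1,1,-1,0,0,1]]),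
    ([1,-1,-1,0,0,1,0], [[0,0,0,0,0,0,2],[1,1,-1,0,0,-1,0],[1,-1,-1,0,0,1,0],[1,0,1,1,-1,0,0],[1,0,1,-1,1,0,0],[0,1,0,1,1,1,0],[0,1,0,-1,-1,1,0]]),
    ([1,-1,-1,0,0,-1,0], [[0,0,1,0,1,-1,-1],[1,0,0,1,0,1,-1],[1,1,0,0,1,0,1],[1,-1,-1,0,0,-1,0],[0,1,-1,-1,0,0,-1],[1,0,1,-1,-1,0,0],[0,1,0,1,-1,-1,0]]),
    ([0,1,1,1,0,0,1], [[0,0,0,0,2,0,0],[1,0,0,1,0,-1,-1],[1,0,0,-1,0,-1,1],[1,1,-1,0,0,1,0],[1,-1,1,0,0,1,0],[0,1,1,1,0,0,1],[0,1,1,-1,0,0,-1]]),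
    ([0,1,1,1,0,0,-1], [[0,0,1,0,1,1,1],[1,0,0,-1,0,1,-1],[1,1,0,0,-1,0,1],[1,-1,1,0,0,-1,0],[0,1,1,1,0,0,-1],[1,0,-1,1,1,0,0],[0,1,0,-1,1,-1,0]]),
    ([0,1,1,-1,0,0,1], [[0,0,1,0,1,1,-1],[1,0,0,1,0,1,1],[1,1,0,0,-1,0,-1],[1,-1,1,0,0,-1,0],[0,1,1,-1,0,0,1],[1,0,-1,-1,1,0,0],[0,1,0,1,1,-1,0]]),
    ([0,1,1,-1,0,0,-1], [[2,0,0,0,0,0,0],[0,0,0,0,2,0,0],[0,0,0,0,0,2,0],[0,1,1,1,0,0,1],[0,1,1,-1,0,0,-1],[0,1,-1,1,0,0,-1],[0,1,-1,-1,0,0,1]]),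
    ([0,1,-1,1,0,0,1], [[0,0,1,0,1,1,1],[1,0,0,1,0,1,-1],[1,-1,0,0,-1,0,1],[1,1,1,0,0,-1,0],[0,1,-1,1,0,0,1],[1,0,-1,-1,1,0,0],[0,1,0,-1,-1,1,0]]),
    ([0,1,-1,1,0,0,-1], [[0,0,0,0,0,2,0],[1,1,0,0,1,0,1],[1,-1,0,0,1,0,-1],[0,1,1,-1,0,0,-1],[0,1,-1,1,0,0,-1],[1,0,1,1,-1,0,0],[1,0,-1,-1,-1,0,0]]),
    ([0,1,-1,-1,0,0,1], [[2,0,0,0,0,0,0],[0,0,1,0,1,-1,1],[0,0,1,0,-1,1,1],[0,1,1,-1,0,0,-1],[0,1,-1,-1,0,0,1],[0,1,0,1,1,1,0],[0,1,0,1,-1,-1,0]]),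
    ([0,1,-1,-1,0,0,-1], [[0,0,1,0,-1,-1,-1],[1,0,0,1,0,1,-1],[1,1,0,0,-1,0,1],[1,-1,-1,0,0,-1,0],[0,1,-1,-1,0,0,-1],[1,0,1,-1,1,0,0],[0,1,0,1,1,-1,0]]),
    ([1,0,1,1,1,0,0], [[0,2,0,0,0,0,0],[0,0,0,0,0,2,0],[0,0,0,0,0,0,2],[1,0,1,1,1,0,0],[1,0,1,-1,-1,0,0],[1,0,-1,1,-1,0,0],[1,0,-1,-1,1,0,0]]),
    ([1,0,1,1,-1,0,0], [[0,0,1,0,1,1,-1],[1,0,0,-1,0,-1,-1],[1,1,0,0,1,0,1],[1,-1,-1,0,0,1,0],[0,1,-1,1,0,0,-1],[1,0,1,1,-1,0,0],[0,1,0,-1,-1,1,0]]),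
    ([1,0,1,-1,1,0,0], [[0,0,1,0,-1,1,-1],[1,0,0,1,0,-1,-1],[1,1,0,0,-1,0,1],[1,-1,-1,0,0,1,0],[0,1,-1,-1,0,0,-1],[1,0,1,-1,1,0,0],[0,1,0,1,1,1,0]]),
    ([1,0,1,-1,-1,0,0], [[0,0,0,0,0,0,2],[1,1,-1,0,0,1,0],[1,-1,-1,0,0,-1,0],[1,0,1,1,1,0,0],[1,0,1,-1,-1,0,0],[0,1,0,1,-1,-1,0],[0,1,0,-1,1,-1,0]]),
    ([1,0,-1,1,1,0,0], [[0,0,1,0,1,-1,1],[1,0,0,-1,0,-1,-1],[1,1,0,0,-1,0,1],[1,-1,1,0,0,1,0],[0,1,1,1,0,0,-1],[1,0,-1,1,1,0,0],[0,1,0,-1,1,1,0]]),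
    ([1,0,-1,1,-1,0,0], [[0,2,0,0,0,0,0],[0,0,1,0,-1,1,1],[0,0,1,0,-1,-1,-1],[1,0,0,-1,0,1,-1],[1,0,0,-1,0,-1,1],[1,0,1,1,1,0,0],[1,0,-1,1,-1,0,0]]),
    ([1,0,-1,-1,1,0,0], [[0,0,0,0,0,2,0],[1,1,0,0,-1,0,-1],[1,-1,0,0,-1,0,1],[0,1,1,-1,0,0,1],[0,1,-1,1,0,0,1],[1,0,1,1,1,0,0],[1,0,-1,-1,1,0,0]]),
    ([1,0,-1,-1,-1,0,0], [[0,0,1,0,-1,1,-1],[1,0,0,1,0,1,1],[1,-1,0,0,1,0,-1],[1,1,1,0,0,-1,0],[0,1,-1,1,0,0,-1],[1,0,-1,-1,-1,0,0],[0,1,0,-1,1,1,0]]),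
    ([0,1,0,1,1,1,0], [[0,0,1,0,-1,1,1],[1,0,0,1,0,-1,1],[1,1,0,0,-1,0,-1],[1,-1,-1,0,0,1,0],[0,1,-1,-1,0,0,1],[1,0,1,-1,1,0,0],[0,1,0,1,1,1,0]]),
    ([0,1,0,1,1,-1,0], [[2,0,0,0,0,0,0],[0,0,1,0,1,1,-1],[0,0,1,0,-1,-1,-1],[0,1,1,-1,0,0,1],[0,1,-1,-1,0,0,-1],[0,1,0,1,1,-1,0],[0,1,0,1,-1,1,0]]),
    ([0,1,0,1,-1,1,0], [[2,0,0,0,0,0,0],[0,0,2,0,0,0,0],[0,0,0,0,0,0,2],[0,1,0,1,1,-1,0],[0,1,0,1,-1,1,0],[0,1,0,-1,1,1,0],[0,1,0,-1,-1,-1,0]]),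
    ([0,1,0,1,-1,-1,0], [[0,0,1,0,1,-1,1],[1,0,0,1,0,1,1],[1,1,0,0,1,0,-1],[1,-1,-1,0,0,-1,0],[0,1,-1,-1,0,0,1],[1,0,1,-1,-1,0,0],[0,1,0,1,-1,-1,0]]),
    ([0,1,0,-1,1,1,0], [[0,0,0,0,0,0,2],[1,1,1,0,0,-1,0],[1,-1,1,0,0,1,0],[1,0,-1,1,1,0,0],[1,0,-1,-1,-1,0,0],[0,1,0,1,-1,1,0],[0,1,0,-1,1,1,0]]),
    ([0,1,0,-1,1,-1,0], [[0,0,1,0,1,1,1],[1,0,0,1,0,-1,1],[1,-1,0,0,1,0,-1],[1,1,-1,0,0,1,0],[0,1,1,1,0,0,-1],[1,0,1,-1,-1,0,0],[0,1,0,-1,1,-1,0]]),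
    ([0,1,0,-1,-1,1,0], [[0,0,1,0,1,1,1],[1,0,0,-1,0,-1,1],[1,1,0,0,1,0,-1],[1,-1,-1,0,0,1,0],[0,1,-1,1,0,0,1],[1,0,1,1,-1,0,0],[0,1,0,-1,-1,1,0]]),
    ([0,1,0,-1,-1,-1,0], [[0,0,2,0,0,0,0],[1,0,0,1,0,-1,-1],[1,0,0,-1,0,1,-1],[1,1,0,0,1,0,1],[1,-1,0,0,-1,0,1],[0,1,0,1,-1,1,0],[0,1,0,-1,-1,-1,0]])]"

definition e7_roots :: "int list list" where
  "e7_roots = map fst e7_frame_table"

definition e7_frame :: "int list \<Rightarrow> int list list" where
  "e7_frame x = the (map_of e7_frame_table x)"

definition d7_roots :: "int list list" where
  "d7_roots = [map (\<lambda>k. if k = i then a else if k = j then b else 0) [0..<7].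
                 i \<leftarrow> [0..<7], j \<leftarrow> [Suc i..<7], a \<leftarrow> [2, -2], b \<leftarrow> [2, -2]]"

lemma e7_roots_norm: "\<forall>x\<in>set e7_roots. length x = 7 \<and> dot x x = 4"
  by code_simp

lemma e7_roots_dot: "\<forall>x\<in>set e7_roots. \<forall>x'\<in>set e7_roots. x \<noteq> x' \<longrightarrow> dot x x' \<in> {-2, 0, 2}"
  by code_simp

lemma distinct_e7_roots: "distinct e7_roots \<and> length e7_roots = 63"
  by code_simp

lemma e7_frame_table_frames:
  "\<forall>(x, ys)\<in>set e7_frame_table. distinct ys \<and> length ys = 7 \<and> set ys \<subseteq> set e7_roots \<and>
     (\<forall>y\<in>set ys. \<forall>y'\<in>set ys. y \<noteq> y' \<longrightarrow> dot y y' = 0)"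
  by code_simp

lemma e7_frame_table_disjoint:
  "\<forall>(x, ys)\<in>set e7_frame_table. \<forall>(x', ys')\<in>set e7_frame_table.
     x \<noteq> x' \<longrightarrow> dot x x' \<noteq> 0 \<longrightarrow> (\<forall>y\<in>set ys. y \<notin> set ys')"
  by code_simp

lemma d7_roots_norm: "\<forall>u\<in>set d7_roots. length u = 7 \<and> dot u u = 8"
  by code_simp

lemma d7_roots_dot: "\<forall>u\<in>set d7_roots. \<forall>u'\<in>set d7_roots. u \<noteq> u' \<longrightarrow> dot u u' \<in> {-8, -4, 0, 4}"
  by code_simp

lemma e7_d7_dot: "\<forall>x\<in>set e7_roots. \<forall>u\<in>set d7_roots. dot x u \<in> {-4, -2, 0, 2, 4}"
  by code_simp

lemma distinct_d7_roots: "distinct d7_roots \<and> length d7_roots = 84"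
  by code_simp

lemma e7_frame_in_table: "x \<in> set e7_roots \<Longrightarrow> (x, e7_frame x) \<in> set e7_frame_table"
proof -
  assume "x \<in> set e7_roots"
  then obtain ys where ys: "(x, ys) \<in> set e7_frame_table" by (auto simp: e7_roots_def)
  then have "map_of e7_frame_table x = Some ys"
    using distinct_e7_roots by (simp add: e7_roots_def map_of_is_SomeI)
  with ys show ?thesis by (simp add: e7_frame_def)
qed

interpretation e7_d7: frame_doubling 7 "set e7_roots" "\<lambda>x. set (e7_frame x)" "set d7_roots"
proof
  fix x x' assume x: "x \<in> set e7_roots" and x': "x' \<in> set e7_roots"
  note frames = e7_frame_table_frames[rule_format, OF e7_frame_in_table[OF x], unfolded prod.case]
  show "set (e7_frame x) \<subseteq> set e7_roots" using frames by blast
  show "dot y y' = 0" if "y \<in> set (e7_frame x)" "y' \<in> set (e7_frame x)" "y \<noteq> y'" for y y'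
    using frames that by blast
  show "set (e7_frame x) \<inter> set (e7_frame x') = {}" if "x \<noteq> x'" "dot x x' \<noteq> 0"
    using e7_frame_table_disjoint e7_frame_in_table[OF x] e7_frame_in_table[OF x'] that by fastforce
qed (use e7_roots_norm e7_roots_dot d7_roots_norm d7_roots_dot e7_d7_dot in auto)

lemma card_e7_d7_code_index: "card e7_d7.code_index = 1932"
proof -
  have "card (set (e7_frame x)) = 7" if "x \<in> set e7_roots" for x
    using e7_frame_table_frames e7_frame_in_table[OF that] by (fastforce simp: distinct_card)
  then show ?thesis
    using distinct_e7_roots distinct_d7_roots by (simp add: e7_d7.card_code_index distinct_card)
qed

theorem mainTheorem8:
  shows "(\<exists>S :: (real ^ 14) set. finite S \<and> card S = 1932 \<and>
            (\<forall>x\<in>S. norm x = 1) \<and>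
            (\<forall>x\<in>S. \<forall>y\<in>S. x \<noteq> y \<longrightarrow>
               inner x y \<in> {0, 1/4, -1/4, 1/2, -1/2, -1}))
         \<and> kissing_number TYPE(real ^ 14) \<ge> 1932"
proof -
  let ?W = "e7_d7.code_vector ` e7_d7.code_index"
  have card_W: "card ?W = 1932"
    using card_image[OF e7_d7.inj_on_code_vector] card_e7_d7_code_index by simp
  obtain S :: "(real ^ 14) set" where S: "finite S" "card S = 1932"
    "\<And>x. x \<in> S \<Longrightarrow> norm x = 1"
    "\<And>x y. x \<in> S \<Longrightarrow> y \<in> S \<Longrightarrow> x \<noteq> y \<Longrightarrow> \<exists>v\<in>?W. \<exists>w\<in>?W. v \<noteq> w \<and> inner x y = dot v w / 8"
  proof (rule unit_vectors_of_int_lists[of ?W 8])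
    show "length v = CARD(14)" "dot v v = 8" if "v \<in> ?W" for v
      using that e7_d7.length_code_vector e7_d7.dot_code_vector_self by auto
  qed (simp_all add: e7_d7.finite_code_index card_W)
  have inner_S: "inner x y \<in> {0, 1/4, -1/4, 1/2, -1/2, -1}" if "x \<in> S" "y \<in> S" "x \<noteq> y" for x y
    using S(4)[OF that] e7_d7.dot_code_vectors by force
  then have "kissing_config S"
    using S(3) by (force simp: kissing_config_def)
  then have "1932 \<le> kissing_number TYPE(real ^ 14)"
    using card_le_kissing_number[OF S(1)] S(2) by simp
  then show ?thesis
    using S(1-3) inner_S by blast
qed

end
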